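(* For every integer $n\ge 0$, $$\|E_{n+1}^k\|_k^2=\|E_{-n}^k\|_k^2=n!\,\frac{\Gamma(n+2k+1)}{\Gamma(n+k+1)^2}.$$
   Context: Fix $k\ge 0$. Partial order on $\mathbb{Z}$: $j\triangleleft n$ iff either ($|j|<|n|$ and $|n|-|j|$ is a positive even integer) or ($|j|=|n|$ and $n<j$). Let $\delta_k(x)=|2\sin x|^{2k}$ and on $L^2([0,2\pi),\delta_k(x)dx)$ use $(f,g)_k=\frac{1}{2\pi}\int_0^{2\pi} f(x)\overline{g(x)}\delta_k(x)\,dx$ with norm $\|\cdot\|_k$. The non-symmetric Heckman–Opdam polynomials $E_n^k$, $n\in\mathbb{Z}$, are the functions on $\mathbb{R}$ of the form $E_n^k(x)=e^{nx}+\sum_{j\triangleleft n}c_{n,j}e^{jx}$ (finite sum) such that $(E_n^k(i\,\cdot),e^{ij\,\cdot})_k=0$ for all $j\triangleleft n$. Here $\|E_n^k\|_k$ denotes the $\|\cdot\|_k$-norm of the function $x\mapsto E_n^k(ix)$. *)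

theory Defs
  imports "HOL-Analysis.Analysis"
begin

definition ho_less :: "int \<Rightarrow> int \<Rightarrow> bool" where
  "ho_less j n \<longleftrightarrow>
     (\<bar>j\<bar> < \<bar>n\<bar> \<and> even (\<bar>n\<bar> - \<bar>j\<bar>)) \<or> (\<bar>j\<bar> = \<bar>n\<bar> \<and> n < j)"

text \<open>Weight delta_k(x) = |2 sin x|^(2k), with the convention t^0 = 1.\<close>
definition ho_weight :: "real \<Rightarrow> real \<Rightarrow> real" where
  "ho_weight k x = (if k = 0 then 1 else \<bar>2 * sin x\<bar> powr (2 * k))"

definition ho_inner :: "real \<Rightarrow> (real \<Rightarrow> complex) \<Rightarrow> (real \<Rightarrow> complex) \<Rightarrow> complex" where
  "ho_inner k f g =
     integral {0..2*pi} (\<lambda>x. f x * cnj (g x) * complex_of_real (ho_weight k x)) / (2 * pi)"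

definition ho_norm2 :: "real \<Rightarrow> (real \<Rightarrow> complex) \<Rightarrow> real" where
  "ho_norm2 k f = integral {0..2*pi} (\<lambda>x. (cmod (f x))\<^sup>2 * ho_weight k x) / (2 * pi)"

definition ho_form :: "int \<Rightarrow> (int \<Rightarrow> complex) \<Rightarrow> complex \<Rightarrow> complex" where
  "ho_form n c z = exp (of_int n * z) + (\<Sum>j\<in>{j. ho_less j n}. c j * exp (of_int j * z))"

definition ho_coeffs :: "real \<Rightarrow> int \<Rightarrow> int \<Rightarrow> complex" where
  "ho_coeffs k n = (THE c. (\<forall>j. \<not> ho_less j n \<longrightarrow> c j = 0) \<and>
      (\<forall>j. ho_less j n \<longrightarrow>
         ho_inner k (\<lambda>x. ho_form n c (\<i> * of_real x)) (\<lambda>x. exp (\<i> * of_int j * of_real x)) = 0))"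

definition HO_E :: "real \<Rightarrow> int \<Rightarrow> complex \<Rightarrow> complex" where
  "HO_E k n = ho_form n (ho_coeffs k n)"

end

(*
  The moments m_j of the weight |2 sin x|^(2k) over a period satisfy a two-term recurrence
  (integrate the derivative of |2 sin x|^(2k) (e^(i(j+2)x) - e^(ijx)) over a period), and m_0
  is a Beta integral; hence m_(2m) = m_0 (-1)^m binom(2k, k+m) / binom(2k, k).

  E_(n+1)(ix) and E_(-n)(ix) are combinations of e^(i(2j+s)x), j = 0..n, with s = 1 - n resp.
  s = -n. The candidate coefficients b_j = binom(n,j) (k)_(n-j) (k+1)_j / (k+1)_n (reversed
  for E_(-n)) are orthogonal to the lower exponentials: after cancelling Gamma factors, each
  orthogonality relation is an n-th finite difference of a polynomial of degree < n. They are
  the coefficients of E because the Gram matrix of the exponentials is positive definite.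
  Finally the squared norm of E equals its inner product with the leading exponential,
  which a partial fraction identity evaluates to n! (2k+1)_n / (k+1)_n^2 times m_0 / (2 pi).
*)
theory Submission
  imports Defs "HOL-Computational_Algebra.Polynomial"
begin

section \<open>The weight and its trigonometric moments\<close>

lemma has_vector_derivative_exp_int:
  "((\<lambda>x::real. exp (\<i> * of_int m * of_real x)) has_vector_derivative
     (\<i> * of_int m * exp (\<i> * of_int m * of_real x))) (at x within S)"
proof -
  have "((\<lambda>z. exp (\<i> * of_int m * z)) has_field_derivative
          (\<i> * of_int m * exp (\<i> * of_int m * of_real x))) (at (of_real x))"
    by (auto intro!: derivative_eq_intros)
  from has_vector_derivative_real_field[OF this] show ?thesis .
qed

lemma exp_int_two_pi: "exp (\<i> * of_int m * of_real (2 * pi)) = 1"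
proof -
  have "exp (complex_of_real (2 * real_of_int m * pi) * \<i>) = 1"
    by (rule exp_integer_2pi) simp
  then show ?thesis by (simp add: mult_ac)
qed

lemma exp_int_mult_cnj:
  "exp (\<i> * of_int a * of_real x) * cnj (exp (\<i> * of_int b * of_real x)) =
   exp (\<i> * of_int (a - b) * of_real x)"
proof -
  have "cnj (exp (\<i> * of_int b * of_real x)) = exp (- (\<i> * of_int b * of_real x))"
    by (simp add: exp_cnj)
  then show ?thesis by (simp add: exp_add[symmetric] algebra_simps)
qed

lemma cos_mult_exp_double_minus_one:
  "complex_of_real (cos x) * (exp (\<i> * of_real (2 * x)) - 1) =
   \<i> * of_real (sin x) * (exp (\<i> * of_real (2 * x)) + 1)"
proof -
  have e: "exp (\<i> * of_real (2 * x)) = of_real (cos (2 * x)) + \<i> * of_real (sin (2 * x))"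
    by (simp add: complex_eq_iff Re_exp Im_exp)
  have re: "cos x * (cos (2 * x) - 1) = - (sin x * sin (2 * x))"
    unfolding cos_double_sin sin_double by (simp add: algebra_simps power2_eq_square)
  have im: "cos x * sin (2 * x) = sin x * (cos (2 * x) + 1)"
    unfolding cos_double_cos sin_double by (simp add: algebra_simps power2_eq_square)
  from re im show ?thesis unfolding e by (simp add: complex_eq_iff algebra_simps)
qed

lemma sin_neq_zero_in_period: "x \<in> {0<..<2 * pi} - {pi} \<Longrightarrow> sin x \<noteq> 0"
proof
  assume x: "x \<in> {0<..<2 * pi} - {pi}" and "sin x = 0"
  then obtain i :: int where i: "x = of_int i * pi" by (auto simp: sin_zero_iff_int2)
  from x i have "0 < of_int i * pi" "of_int i * pi < 2 * pi" "of_int i * pi \<noteq> pi" by auto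
  then have "0 < i" "i < 2" "i \<noteq> 1"
    by (auto simp: zero_less_mult_iff mult_less_cancel_right2)
  then show False by simp
qed

lemma ho_weight_nonneg: "ho_weight k x \<ge> 0"
  by (simp add: ho_weight_def)

lemma ho_weight_neq_zero: "sin x \<noteq> 0 \<Longrightarrow> ho_weight k x \<noteq> 0"
  by (simp add: ho_weight_def)

lemma continuous_on_ho_weight: "k \<ge> 0 \<Longrightarrow> continuous_on S (ho_weight k)"
  unfolding ho_weight_def
  by (cases "k = 0") (auto intro!: continuous_intros continuous_on_powr')

lemma ho_weight_eq_powr: "k > 0 \<Longrightarrow> ho_weight k x = ((2 * sin x)\<^sup>2) powr k"
proof -
  assume k: "k > 0"
  have "ho_weight k x = (\<bar>2 * sin x\<bar> powr 2) powr k"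
    using k by (simp only: ho_weight_def powr_powr) simp
  also have "\<bar>2 * sin x\<bar> powr 2 = (2 * sin x)\<^sup>2"
    by (cases "sin x = 0") (simp_all add: powr_numeral)
  finally show ?thesis .
qed

lemma has_real_derivative_ho_weight:
  assumes k: "k \<ge> 0" and s: "sin x \<noteq> 0"
  shows "(ho_weight k has_real_derivative (2 * k * ho_weight k x * cos x / sin x)) (at x)"
proof (cases "k = 0")
  case True
  then show ?thesis by (simp add: ho_weight_def[abs_def])
next
  case False
  with k have k: "k > 0" by simp
  have pos: "0 < (2 * sin x)\<^sup>2" using s by simp
  have "((\<lambda>x. ((2 * sin x)\<^sup>2) powr k) has_real_derivative
          k * ((2 * sin x)\<^sup>2) powr (k - real 1) * (2 * (2 * sin x) * (2 * cos x))) (at x)"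
    by (rule DERIV_fun_powr[of "\<lambda>x. (2 * sin x)\<^sup>2", OF _ pos]) (auto intro!: derivative_eq_intros)
  moreover have "k * ((2 * sin x)\<^sup>2) powr (k - real 1) * (2 * (2 * sin x) * (2 * cos x))
                   = 2 * k * ho_weight k x * cos x / sin x"
    using s pos by (simp add: ho_weight_eq_powr[OF k] powr_diff field_simps power2_eq_square)
  ultimately show ?thesis
    by (simp add: ho_weight_eq_powr[OF k, abs_def])
qed

definition ho_moment :: "real \<Rightarrow> int \<Rightarrow> complex" where
  "ho_moment k j = integral {0..2*pi} (\<lambda>x. exp (\<i> * of_int j * of_real x) * of_real (ho_weight k x))"

lemma has_integral_ho_moment:
  assumes "k \<ge> 0"
  shows "((\<lambda>x. exp (\<i> * of_int j * of_real x) * of_real (ho_weight k x)) has_integral ho_moment k j)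
           {0..2*pi}"
  unfolding ho_moment_def
  by (intro integrable_integral integrable_continuous_interval)
     (auto intro!: continuous_intros continuous_on_compose2[OF continuous_on_ho_weight[OF assms]])

lemma has_vector_derivative_ho_weight_exp_diff:
  fixes j :: int
  assumes k: "k \<ge> 0" and s: "sin x \<noteq> 0"
  defines "e \<equiv> \<lambda>m x. exp (\<i> * of_int m * of_real x)"
  shows "((\<lambda>x. of_real (ho_weight k x) * (e (j + 2) x - e j x)) has_vector_derivative
           \<i> * (of_int j + 2 + 2 * of_real k) * (e (j + 2) x * of_real (ho_weight k x))
         + \<i> * (2 * of_real k - of_int j) * (e j x * of_real (ho_weight k x))) (at x)"
proof -
  define w where "w = ho_weight k x"
  define z where "z = exp (\<i> * of_real (2 * x))"
  have e2: "e (j + 2) x = e j x * z"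
    by (simp add: e_def z_def exp_add[symmetric] algebra_simps)
  have "of_real (2 * k * w * cos x / sin x) * (z - 1)
          = of_real (2 * k * w / sin x) * (complex_of_real (cos x) * (z - 1))"
    by simp
  also have "\<dots> = \<i> * of_real (2 * k * w) * (z + 1)"
    unfolding z_def cos_mult_exp_double_minus_one using s by (simp add: field_simps)
  finally have cot_term: "of_real (2 * k * w * cos x / sin x) * (z - 1) = \<i> * of_real (2 * k * w) * (z + 1)" .
  have weight_term: "of_real (2 * k * w * cos x / sin x) * (e (j + 2) x - e j x)
                 = e j x * (\<i> * of_real (2 * k * w) * (z + 1))"
    unfolding e2 cot_term[symmetric] by (simp add: algebra_simps)
  have "((\<lambda>x. of_real (ho_weight k x) * (e (j + 2) x - e j x)) has_vector_derivative
          of_real w * (\<i> * of_int (j + 2) * e (j + 2) x - \<i> * of_int j * e j x)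
        + of_real (2 * k * w * cos x / sin x) * (e (j + 2) x - e j x)) (at x)"
    unfolding e_def w_def
    by (intro has_vector_derivative_mult has_vector_derivative_diff has_vector_derivative_exp_int
          has_vector_derivative_of_real has_real_derivative_ho_weight k s)
  also have "of_real w * (\<i> * of_int (j + 2) * e (j + 2) x - \<i> * of_int j * e j x)
        + of_real (2 * k * w * cos x / sin x) * (e (j + 2) x - e j x)
      = \<i> * (of_int j + 2 + 2 * of_real k) * (e (j + 2) x * of_real w)
        + \<i> * (2 * of_real k - of_int j) * (e j x * of_real w)"
    unfolding weight_term unfolding e2 by (simp add: algebra_simps)
  finally show ?thesis unfolding w_def .
qed

text \<open>Integration by parts against the weight: the boundary terms cancel by periodicity.\<close>

lemma ho_moment_recurrence:
  assumes k: "k \<ge> 0"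
  shows "(of_int j + 2 + 2 * of_real k) * ho_moment k (j + 2) + (2 * of_real k - of_int j) * ho_moment k j = 0"
proof -
  define e where "e = (\<lambda>m x. exp (\<i> * of_int m * of_real x))"
  define G where "G = (\<lambda>x. of_real (ho_weight k x) * (e (j + 2) x - e j x))"
  define G' where "G' = (\<lambda>x. \<i> * (of_int j + 2 + 2 * of_real k) * (e (j + 2) x * of_real (ho_weight k x))
      + \<i> * (2 * of_real k - of_int j) * (e j x * of_real (ho_weight k x)))"
  have "(G' has_integral (G (2 * pi) - G 0)) {0..2 * pi}"
  proof (rule fundamental_theorem_of_calculus_interior_strong[of "{pi}"])
    show "continuous_on {0..2 * pi} G" unfolding G_def e_def
      by (auto intro!: continuous_intros continuous_on_compose2[OF continuous_on_ho_weight[OF k]])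
    fix x assume "x \<in> {0<..<2 * pi} - {pi}"
    then show "(G has_vector_derivative G' x) (at x)"
      unfolding G_def G'_def e_def
      by (intro has_vector_derivative_ho_weight_exp_diff k sin_neq_zero_in_period)
  qed auto
  moreover have "G (2 * pi) = G 0"
    unfolding G_def e_def ho_weight_def using exp_int_two_pi[of "j + 2"] exp_int_two_pi[of j] by simp
  ultimately have "(G' has_integral 0) {0..2 * pi}" by simp
  moreover have "(G' has_integral \<i> * (of_int j + 2 + 2 * of_real k) * ho_moment k (j + 2)
                     + \<i> * (2 * of_real k - of_int j) * ho_moment k j) {0..2 * pi}"
    unfolding G'_def e_def
    by (intro has_integral_add has_integral_mult_right has_integral_ho_moment k)
  ultimately have "\<i> * (of_int j + 2 + 2 * of_real k) * ho_moment k (j + 2)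
                     + \<i> * (2 * of_real k - of_int j) * ho_moment k j = 0"
    by (rule has_integral_unique[symmetric])
  then have "\<i> * ((of_int j + 2 + 2 * of_real k) * ho_moment k (j + 2)
                     + (2 * of_real k - of_int j) * ho_moment k j) = 0"
    by (simp add: algebra_simps)
  then show ?thesis by simp
qed

lemma integral_ho_weight_by_substitution:
  fixes g g' :: "real \<Rightarrow> real"
  assumes k: "k > 0" and ab: "a \<le> b"
    and dg: "\<And>x. x \<in> {a..b} \<Longrightarrow> (g has_real_derivative g' x) (at x)"
    and cg: "continuous_on {a..b} g'"
    and pg: "\<And>x. x \<in> {a..b} \<Longrightarrow> g' x \<ge> 0"
    and ga: "g a = 0" and gb: "g b = 1"
    and weight: "\<And>x. x \<in> {a..b} \<Longrightarrow>
                   16 powr k * (g x powr (k - 1/2) * (1 - g x) powr (k - 1/2)) * g' x = ho_weight k x"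
  shows "integral {a..b} (ho_weight k) = 16 powr k * Beta (k + 1/2) (k + 1/2)"
proof -
  define f where "f t = 16 powr k * (t powr (k + 1/2 - 1) * (1 - t) powr (k + 1/2 - 1))" for t
  have kk: "k + 1/2 > 0" using k by simp
  have "set_integrable lborel {0..1} f"
    unfolding f_def by (intro set_integrable_mult_right integrable_Beta[OF kk kk])
  then have si: "set_integrable lborel {g a..g b} f"
    unfolding ga gb .
  note sub = integral_substitution[OF si dg cg pg ab]
  have "(LBINT x. f x * indicator {g a..g b} x) = integral {0..1} f"
    using set_borel_integral_eq_integral(2)[OF si[unfolded ga gb]]
    unfolding set_lebesgue_integral_def ga gb by (simp add: mult.commute)
  also have "\<dots> = 16 powr k * Beta (k + 1/2) (k + 1/2)"
    unfolding f_def using has_integral_Beta_real[OF kk kk] by (simp add: integral_unique)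
  finally have beta: "(LBINT x. f x * indicator {g a..g b} x) = 16 powr k * Beta (k + 1/2) (k + 1/2)" .
  have "(LBINT x. f (g x) * g' x * indicator {a..b} x) = integral {a..b} (\<lambda>x. f (g x) * g' x)"
    using set_borel_integral_eq_integral(2)[OF sub(1)]
    unfolding set_lebesgue_integral_def by (simp add: mult.commute)
  also have "\<dots> = integral {a..b} (ho_weight k)"
    by (rule integral_cong) (simp add: f_def weight)
  finally show ?thesis using beta sub(2) by simp
qed

lemma beta_kernel_half_versine:
  fixes k s c :: real
  assumes k: "k > 0" and s: "s \<ge> 0" and cs: "c\<^sup>2 + s\<^sup>2 = 1"
  shows "16 powr k * (((1 - c) / 2) powr (k - 1/2) * (1 - (1 - c) / 2) powr (k - 1/2)) * (s / 2)
           = \<bar>2 * s\<bar> powr (2 * k)"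
proof (cases "s = 0")
  case True then show ?thesis using k by simp
next
  case False
  with s have sp: "s > 0" by simp
  then have "s\<^sup>2 > 0" by simp
  then have "c\<^sup>2 < 1" using cs by linarith
  then have cb: "-1 < c" "c < 1" by (auto simp: abs_square_less_1 abs_less_iff)
  define t where "t = (1 - c) / 2"
  have t0: "t > 0" "1 - t > 0" using cb by (auto simp: t_def)
  have tt: "t * (1 - t) = (s / 2) powr 2"
    using cs sp by (simp add: t_def field_simps power2_eq_square powr_numeral)
  have "t powr (k - 1/2) * (1 - t) powr (k - 1/2) = (t * (1 - t)) powr (k - 1/2)"
    using t0 by (simp add: powr_mult)
  also have "\<dots> = (s / 2) powr (2 * k - 1)"
    unfolding tt powr_powr by (simp add: algebra_simps)
  finally have "t powr (k - 1/2) * (1 - t) powr (k - 1/2) * (s / 2) = (s / 2) powr (2 * k - 1) * (s / 2) powr 1"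
    using sp by simp
  also have "\<dots> = (s / 2) powr (2 * k)"
    by (simp only: powr_add[symmetric]) simp
  finally have A: "t powr (k - 1/2) * (1 - t) powr (k - 1/2) * (s / 2) = (s / 2) powr (2 * k)" .
  have "(16::real) powr k = 4 powr (2 * k)"
    using powr_powr[of 4 2 k] by (simp add: powr_numeral)
  then have "16 powr k * (s / 2) powr (2 * k) = (2 * s) powr (2 * k)"
    using sp by (simp add: powr_mult[symmetric])
  with A sp show ?thesis unfolding t_def[symmetric] by (simp add: mult.assoc)
qed

lemma integral_ho_weight_Beta:
  assumes k: "k > 0"
  shows "integral {0..2*pi} (ho_weight k) = 2 * 16 powr k * Beta (k + 1/2) (k + 1/2)"
proof -
  have sin_nonpos: "sin x \<le> 0" if "x \<in> {pi..2*pi}" for x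
    using that sin_le_zero[of x] by (cases "x = 2 * pi") auto
  have first: "integral {0..pi} (ho_weight k) = 16 powr k * Beta (k + 1/2) (k + 1/2)"
  proof (rule integral_ho_weight_by_substitution[OF k, of 0 pi "\<lambda>x. (1 - cos x) / 2" "\<lambda>x. sin x / 2"])
    fix x :: real assume "x \<in> {0..pi}"
    then have "sin x \<ge> 0" by (auto intro: sin_ge_zero)
    from beta_kernel_half_versine[OF k this, of "cos x"] k
    show "16 powr k * (((1 - cos x) / 2) powr (k - 1/2) * (1 - (1 - cos x) / 2) powr (k - 1/2))
            * (sin x / 2) = ho_weight k x"
      by (simp add: ho_weight_def)
  qed (auto intro!: derivative_eq_intros continuous_intros sin_ge_zero)
  have second: "integral {pi..2*pi} (ho_weight k) = 16 powr k * Beta (k + 1/2) (k + 1/2)"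
  proof (rule integral_ho_weight_by_substitution[OF k, of pi "2*pi" "\<lambda>x. (1 - - cos x) / 2" "\<lambda>x. - sin x / 2"])
    fix x :: real assume x: "x \<in> {pi..2*pi}"
    from beta_kernel_half_versine[OF k _, of "- sin x" "- cos x"] sin_nonpos[OF x] k
    show "16 powr k * (((1 - - cos x) / 2) powr (k - 1/2) * (1 - (1 - - cos x) / 2) powr (k - 1/2))
            * (- sin x / 2) = ho_weight k x"
      by (simp add: ho_weight_def)
  qed (auto intro!: derivative_eq_intros continuous_intros simp: sin_nonpos)
  have "ho_weight k integrable_on {0..2*pi}"
    using continuous_on_ho_weight k by (auto intro: integrable_continuous_interval)
  from Henstock_Kurzweil_Integration.integral_combine[OF _ _ this, of pi]
  have "integral {0..2*pi} (ho_weight k) = integral {0..pi} (ho_weight k) + integral {pi..2*pi} (ho_weight k)"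
    by simp
  then show ?thesis using first second by simp
qed

lemma Gamma_legendre_duplication_real:
  fixes z :: real
  assumes z: "z > 0"
  shows "Gamma z * Gamma (z + 1/2) = 2 powr (1 - 2 * z) * sqrt pi * Gamma (2 * z)"
proof -
  have n1: "complex_of_real z \<notin> \<int>\<^sub>\<le>\<^sub>0" using z
    by (auto simp: of_real_in_nonpos_Ints_iff dest: nonpos_Ints_nonpos)
  have "complex_of_real (z + 1/2) \<notin> \<int>\<^sub>\<le>\<^sub>0" using z
    by (auto simp only: of_real_in_nonpos_Ints_iff dest: nonpos_Ints_nonpos)
  then have n2: "complex_of_real z + 1/2 \<notin> \<int>\<^sub>\<le>\<^sub>0" by simp
  have "complex_of_real (Gamma z * Gamma (z + 1/2)) =
        complex_of_real (exp ((1 - 2 * z) * ln 2) * sqrt pi * Gamma (2 * z))"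
    using Gamma_legendre_duplication[OF n1 n2]
    by (simp flip: Gamma_complex_of_real exp_of_real)
  then show ?thesis by (simp only: of_real_eq_iff) (simp add: powr_def)
qed

definition ho_mass :: "real \<Rightarrow> real" where
  "ho_mass k = 2 * pi * Gamma (2 * k + 1) / (Gamma (k + 1))\<^sup>2"

lemma integral_ho_weight:
  assumes k: "k \<ge> 0"
  shows "integral {0..2*pi} (ho_weight k) = ho_mass k"
proof (cases "k = 0")
  case True
  then show ?thesis by (simp add: ho_weight_def[abs_def] ho_mass_def)
next
  case False
  with k have kp: "k > 0" by simp
  have g: "Gamma (k + 1) > 0" "Gamma (2 * k + 1) > 0" using kp by auto
  have "Gamma (k + 1/2) * Gamma (k + 1) = 2 powr (- 2 * k) * sqrt pi * Gamma (2 * k + 1)"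
    using Gamma_legendre_duplication_real[of "k + 1/2"] kp by (simp add: algebra_simps)
  then have half: "Gamma (k + 1/2) = 2 powr (- 2 * k) * sqrt pi * Gamma (2 * k + 1) / Gamma (k + 1)"
    using g by (simp add: field_simps)
  have "(16::real) powr k = 2 powr (4 * k)"
    using powr_powr[of 2 4 k] by (simp add: powr_numeral)
  then have p: "16 powr k * (2 powr (- 2 * k))\<^sup>2 = 1"
    by (simp add: power2_eq_square powr_add[symmetric])
  have "Beta (k + 1/2) (k + 1/2) = (Gamma (k + 1/2))\<^sup>2 / Gamma (2 * k + 1)"
    by (simp add: Beta_def power2_eq_square algebra_simps)
  then show ?thesis
    unfolding integral_ho_weight_Beta[OF kp] half ho_mass_def using g p
    by (simp add: field_simps power2_eq_square)
qed

lemma ho_moment_0: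
  assumes k: "k \<ge> 0"
  shows "ho_moment k 0 = of_real (ho_mass k)"
proof -
  have "ho_weight k integrable_on {0..2*pi}"
    using continuous_on_ho_weight k by (auto intro: integrable_continuous_interval)
  from integral_linear[OF this bounded_linear_of_real]
  have "integral {0..2*pi} (\<lambda>x. complex_of_real (ho_weight k x)) = of_real (ho_mass k)"
    by (simp add: o_def integral_ho_weight[OF k])
  then show ?thesis by (simp add: ho_moment_def)
qed

text \<open>\<open>moment_ratio k m = (-1)\<^sup>m binom(2k, k + m) / binom(2k, k)\<close>, the quotient
  \<open>ho_moment k (2m) / ho_moment k 0\<close>; the reciprocal Gamma factors make it vanish for
  \<open>|m| > k\<close> when \<open>k\<close> is an integer.\<close>

definition moment_ratio :: "real \<Rightarrow> int \<Rightarrow> real" where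
  "moment_ratio k m =
     (-1) ^ nat \<bar>m\<bar> * (Gamma (k + 1))\<^sup>2 * rGamma (k + 1 + of_int m) * rGamma (k + 1 - of_int m)"

lemma moment_ratio_0:
  assumes "k \<ge> 0"
  shows "moment_ratio k 0 = 1"
proof -
  have "Gamma (k + 1) > 0" using assms by simp
  then show ?thesis by (simp add: moment_ratio_def rGamma_inverse_Gamma power2_eq_square field_simps)
qed

lemma moment_ratio_minus: "moment_ratio k (- m) = moment_ratio k m"
  by (simp add: moment_ratio_def algebra_simps)

lemma moment_ratio_weight_0: "m \<noteq> 0 \<Longrightarrow> moment_ratio 0 m = 0"
proof (cases "m > 0")
  case True
  then have "(1::real) - of_int m \<in> \<int>\<^sub>\<le>\<^sub>0"
    by (auto simp: nonpos_Ints_def intro!: exI[of _ "1 - m"])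
  then show ?thesis by (simp add: moment_ratio_def rGamma_nonpos_Int)
next
  case False
  moreover assume "m \<noteq> 0"
  ultimately have "(1::real) + of_int m \<in> \<int>\<^sub>\<le>\<^sub>0"
    by (auto simp: nonpos_Ints_def intro!: exI[of _ "1 + m"])
  then show ?thesis by (simp add: moment_ratio_def rGamma_nonpos_Int)
qed

lemma minus_one_power_nat_abs_pred: "(-1::'a::ring_1) ^ nat \<bar>m\<bar> = - ((-1) ^ nat \<bar>m - 1\<bar>)"
proof (cases "m \<ge> 1")
  case True
  then have "nat \<bar>m\<bar> = Suc (nat \<bar>m - 1\<bar>)" by simp
  then show ?thesis by (simp only: power_Suc mult_minus1 minus_minus)
next
  case False
  then have "nat \<bar>m - 1\<bar> = Suc (nat \<bar>m\<bar>)" by simp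
  then show ?thesis by (simp only: power_Suc mult_minus1 minus_minus)
qed

lemma moment_ratio_recurrence:
  "(of_int m + k) * moment_ratio k m = (of_int m - 1 - k) * moment_ratio k (m - 1)"
proof -
  have r1: "(k + of_int m) * rGamma (k + 1 + of_int m) = rGamma (k + of_int m)"
    using rGamma_plus1[of "k + of_int m"] by (simp add: algebra_simps)
  have r2: "rGamma (k + 1 - of_int m) = (k + 1 - of_int m) * rGamma (k + 1 - of_int (m - 1))"
    using rGamma_plus1[of "k + 1 - of_int m"] by (simp add: algebra_simps)
  have "(of_int m + k) * moment_ratio k m = (-1) ^ nat \<bar>m\<bar> * (Gamma (k + 1))\<^sup>2 *
      ((k + of_int m) * rGamma (k + 1 + of_int m)) * rGamma (k + 1 - of_int m)"
    by (simp add: moment_ratio_def algebra_simps)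
  also have "\<dots> = (of_int m - 1 - k) * moment_ratio k (m - 1)"
    unfolding r1 r2 moment_ratio_def minus_one_power_nat_abs_pred[of m] by (simp add: algebra_simps)
  finally show ?thesis .
qed

lemma int_recurrence_unique:
  fixes X Y :: "int \<Rightarrow> 'a::idom"
  assumes X: "\<And>m. a m * X m = b m * X (m - 1)"
    and Y: "\<And>m. a m * Y m = b m * Y (m - 1)"
    and a: "\<And>m. m > 0 \<Longrightarrow> a m \<noteq> 0"
    and b: "\<And>m. m \<le> 0 \<Longrightarrow> b m \<noteq> 0"
    and "X 0 = Y 0"
  shows "X m = Y m"
proof (induction m rule: int_induct[where k = 0])
  case base
  show ?case by fact
next
  case (step1 i)
  have "a (i + 1) * X (i + 1) = a (i + 1) * Y (i + 1)"
    using X[of "i + 1"] Y[of "i + 1"] step1.IH by simp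
  with a[of "i + 1"] step1.hyps show ?case by simp
next
  case (step2 i)
  have "b i * X (i - 1) = a i * X i" by (rule X[symmetric])
  also have "\<dots> = b i * Y (i - 1)" using Y[of i] step2.IH by simp
  finally show ?case using b[of i] step2.hyps by simp
qed

lemma ho_moment_even:
  assumes k: "k \<ge> 0"
  shows "ho_moment k (2 * m) = of_real (ho_mass k * moment_ratio k m)"
proof (rule int_recurrence_unique[where a = "\<lambda>m. of_int m + of_real k" and b = "\<lambda>m. of_int m - 1 - of_real k"])
  fix m :: int
  have "(of_int (2*m - 2) + 2 + 2 * of_real k) * ho_moment k (2*m - 2 + 2)
        + (2 * of_real k - of_int (2*m - 2)) * ho_moment k (2*m - 2) = 0"
    by (rule ho_moment_recurrence[OF k])
  then have "2 * ((of_int m + of_real k) * ho_moment k (2 * m)) =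
             2 * ((of_int m - 1 - of_real k) * ho_moment k (2 * (m - 1)))"
    by (simp add: algebra_simps)
  then show "(of_int m + of_real k) * ho_moment k (2 * m) =
             (of_int m - 1 - of_real k) * ho_moment k (2 * (m - 1))"
    by simp
  have "of_real (ho_mass k * ((of_int m + k) * moment_ratio k m)) =
        of_real (ho_mass k * ((of_int m - 1 - k) * moment_ratio k (m - 1)))"
    by (simp only: moment_ratio_recurrence)
  then show "(of_int m + of_real k) * complex_of_real (ho_mass k * moment_ratio k m) =
             (of_int m - 1 - of_real k) * complex_of_real (ho_mass k * moment_ratio k (m - 1))"
    by (simp add: algebra_simps)
next
  fix m :: int
  have "of_int m + complex_of_real k = of_real (of_int m + k)"
    "of_int m - 1 - complex_of_real k = of_real (of_int m - 1 - k)" by simp_all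
  then show "m > 0 \<Longrightarrow> of_int m + complex_of_real k \<noteq> 0"
    and "m \<le> 0 \<Longrightarrow> of_int m - 1 - complex_of_real k \<noteq> 0"
    using k by (simp_all only: of_real_eq_0_iff)
qed (simp add: ho_moment_0[OF k] moment_ratio_0[OF k])

lemma ho_moment_weight_0: "ho_moment 0 (2 * m) = (if m = 0 then of_real (2 * pi) else 0)"
  using ho_moment_even[of 0 m] moment_ratio_weight_0[of m] moment_ratio_0[of 0]
  by (simp add: ho_mass_def)

section \<open>Finite differences and Pochhammer identities\<close>

lemma alternating_binomial_sum_Suc:
  fixes f :: "nat \<Rightarrow> 'a::comm_ring_1"
  shows "(\<Sum>j\<le>Suc n. (-1) ^ j * of_nat (Suc n choose j) * f j) =
         (\<Sum>j\<le>n. (-1) ^ j * of_nat (n choose j) * (f j - f (Suc j)))"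
proof -
  have "(\<Sum>j\<le>Suc n. (-1) ^ j * of_nat (Suc n choose j) * f j) =
        f 0 + (\<Sum>j\<le>n. (-1) ^ Suc j * of_nat (Suc n choose Suc j) * f (Suc j))"
    by (subst sum.atMost_Suc_shift) simp
  also have "(\<Sum>j\<le>n. (-1) ^ Suc j * of_nat (Suc n choose Suc j) * f (Suc j)) =
      - (\<Sum>j\<le>n. (-1) ^ j * of_nat (n choose j) * f (Suc j))
      - (\<Sum>j\<le>n. (-1) ^ j * of_nat (n choose Suc j) * f (Suc j))"
    by (simp add: binomial_Suc_Suc algebra_simps sum.distrib sum_negf sum_subtractf)
  also have "(\<Sum>j\<le>n. (-1) ^ j * of_nat (n choose Suc j) * f (Suc j)) =
      - ((\<Sum>j\<le>Suc n. (-1) ^ j * of_nat (n choose j) * f j) - f 0)"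
    by (subst sum.atMost_Suc_shift) (simp add: sum_negf)
  also have "(\<Sum>j\<le>Suc n. (-1) ^ j * of_nat (n choose j) * f j) =
             (\<Sum>j\<le>n. (-1) ^ j * of_nat (n choose j) * f j)"
    by (simp add: binomial_eq_0)
  finally show ?thesis by (simp add: sum_subtractf algebra_simps)
qed

lemma degree_diff_pcompose_shift:
  fixes p :: "'a::idom poly"
  assumes "degree p > 0"
  shows "degree (p - pcompose p [:1, 1:]) < degree p"
proof -
  let ?r = "pcompose p [:1, 1:]"
  have dr: "degree ?r = degree p" by (simp add: degree_pcompose)
  have "degree (p - ?r) \<le> degree p" using degree_diff_le[of p "degree p" ?r] dr by simp
  moreover have "coeff (p - ?r) (degree p) = 0"
    using dr lead_coeff_comp[of "[:1, 1:]" p] by simp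
  ultimately show ?thesis
    using assms leading_coeff_neq_0[of "p - ?r"] by (cases "p - ?r = 0") (auto simp: le_less)
qed

lemma alternating_binomial_sum_poly:
  fixes p :: "'a::idom poly"
  assumes "degree p < n \<or> p = 0"
  shows "(\<Sum>j\<le>n. (-1) ^ j * of_nat (n choose j) * poly p (of_nat j)) = 0"
  using assms
proof (induction n arbitrary: p)
  case 0
  then show ?case by simp
next
  case (Suc n)
  let ?q = "p - pcompose p [:1, 1:]"
  have "degree ?q < n \<or> ?q = 0"
  proof (cases "degree p = 0")
    case True
    then obtain c where "p = [:c:]" by (metis degree_eq_zeroE)
    then show ?thesis by (simp add: pcompose_pCons)
  next
    case False
    then have "degree ?q < degree p" by (intro degree_diff_pcompose_shift) simp
    with Suc.prems show ?thesis by auto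
  qed
  then have "(\<Sum>j\<le>n. (-1) ^ j * of_nat (n choose j) * poly ?q (of_nat j)) = 0"
    by (rule Suc.IH)
  moreover have "poly ?q (of_nat j) = poly p (of_nat j) - poly p (of_nat (Suc j))" for j
    by (simp add: poly_pcompose algebra_simps)
  ultimately show ?case
    by (simp only: alternating_binomial_sum_Suc)
qed

lemma poly_pochhammer_affine:
  fixes a c :: "'a::comm_ring_1"
  obtains p where "degree p \<le> n" "\<And>x. poly p x = pochhammer (a + c * x) n"
proof
  let ?p = "\<Prod>i<n. [:a + of_nat i, c:]"
  show "degree ?p \<le> n"
    using degree_prod_sum_le[of "{..<n}" "\<lambda>i. [:a + of_nat i, c:]"] by (auto split: if_splits)
  show "poly ?p x = pochhammer (a + c * x) n" for x
    by (simp add: poly_prod pochhammer_prod atLeast0LessThan algebra_simps)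
qed

lemma poly_eq_linear_factor_remainder:
  fixes p :: "'a::idom poly"
  assumes "degree p \<le> n"
  obtains R where "degree R < n \<or> R = 0" "\<And>x. poly p x = poly p a + (x - a) * poly R x"
proof -
  have "poly (p - [:poly p a:]) a = 0" by simp
  then obtain R where R: "p - [:poly p a:] = [:- a, 1:] * R"
    by (metis dvdE poly_eq_0_iff_dvd)
  show thesis
  proof
    show "poly p x = poly p a + (x - a) * poly R x" for x
      using arg_cong[OF R, of "\<lambda>q. poly q x"] by (simp add: algebra_simps)
    show "degree R < n \<or> R = 0"
    proof (cases "R = 0")
      case False
      then have "degree ([:- a, 1:] * R) = Suc (degree R)"
        by (subst degree_mult_eq) auto
      moreover have "degree (p - [:poly p a:]) \<le> n"
        using degree_diff_le[of p n "[:poly p a:]"] assms by simp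
      ultimately show ?thesis using R by simp
    qed simp
  qed
qed

lemma alternating_binomial_sum_inverse:
  fixes k :: real
  assumes "k > 0"
  shows "(\<Sum>j\<le>n. (-1) ^ j * real (n choose j) * (1 / (k + real n - real j))) =
         (-1) ^ n * fact n / pochhammer k (Suc n)"
  using assms
proof (induction n arbitrary: k)
  case 0
  then show ?case by simp
next
  case (Suc n)
  have k1: "k + 1 > 0" using Suc.prems by simp
  have pos: "pochhammer (k + 1) (Suc n) > 0" "pochhammer k (Suc n) > 0"
    using Suc.prems by (auto simp: pochhammer_pos)
  have "(\<Sum>j\<le>Suc n. (-1) ^ j * real (Suc n choose j) * (1 / (k + real (Suc n) - real j))) =
     (\<Sum>j\<le>n. (-1) ^ j * real (n choose j) * (1 / (k + real (Suc n) - real j) - 1 / (k + real (Suc n) - real (Suc j))))"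
    by (rule alternating_binomial_sum_Suc)
  also have "\<dots> = (\<Sum>j\<le>n. (-1) ^ j * real (n choose j) * (1 / ((k + 1) + real n - real j)))
       - (\<Sum>j\<le>n. (-1) ^ j * real (n choose j) * (1 / (k + real n - real j)))"
    by (simp add: sum_subtractf algebra_simps)
  also have "\<dots> = (-1) ^ n * fact n * (1 / pochhammer (k + 1) (Suc n) - 1 / pochhammer k (Suc n))"
    using Suc.IH[OF k1] Suc.IH[OF Suc.prems] by (simp add: algebra_simps)
  also have "1 / pochhammer (k + 1) (Suc n) - 1 / pochhammer k (Suc n)
             = - real (Suc n) / pochhammer k (Suc (Suc n))"
  proof -
    have "pochhammer k (Suc (Suc n)) = k * pochhammer (k + 1) (Suc n)"
      by (simp add: pochhammer_rec)
    then have "1 / pochhammer (k + 1) (Suc n) = k / pochhammer k (Suc (Suc n))"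
      using pos Suc.prems by simp
    moreover have "pochhammer k (Suc (Suc n)) = pochhammer k (Suc n) * (k + real (Suc n))"
      by (simp add: pochhammer_rec' algebra_simps)
    then have "1 / pochhammer k (Suc n) = (k + real (Suc n)) / pochhammer k (Suc (Suc n))"
      using pos Suc.prems by simp
    ultimately show ?thesis by (simp add: diff_divide_distrib[symmetric])
  qed
  finally show ?case by (simp add: algebra_simps)
qed

lemma pochhammer_rGamma_swap:
  fixes a b :: "'a::Gamma"
  assumes "a + of_nat p = b + of_nat q"
  shows "pochhammer a p * rGamma b = pochhammer b q * rGamma a"
  using pochhammer_rGamma[of a p] pochhammer_rGamma[of b q] assms by (simp add: mult_ac)

lemma minus_one_power_nat_abs_diff:
  "(-1::'a::ring_1) ^ nat \<bar>int a - int b\<bar> = (-1) ^ a * (-1) ^ b"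
proof -
  have "a + b = nat \<bar>int a - int b\<bar> + 2 * min a b" by auto
  then have "(-1::'a) ^ (a + b) = (-1) ^ nat \<bar>int a - int b\<bar> * ((-1) ^ 2) ^ min a b"
    by (simp only: power_add power_mult)
  then show ?thesis by (simp add: power_add)
qed

lemma sum_sum_orthogonal:
  fixes b c :: "nat \<Rightarrow> 'a::comm_semiring_0"
  assumes "i0 \<le> n" and "\<And>l. l \<le> n \<Longrightarrow> l \<noteq> i0 \<Longrightarrow> (\<Sum>i\<le>n. b i * a i l) = 0"
  shows "(\<Sum>i\<le>n. \<Sum>l\<le>n. b i * c l * a i l) = c i0 * (\<Sum>i\<le>n. b i * a i i0)"
proof -
  have "(\<Sum>i\<le>n. \<Sum>l\<le>n. b i * c l * a i l) = (\<Sum>l\<le>n. c l * (\<Sum>i\<le>n. b i * a i l))"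
    by (subst sum.swap) (simp add: sum_distrib_left mult_ac)
  also have "\<dots> = c i0 * (\<Sum>i\<le>n. b i * a i i0)"
    using assms by (subst sum.remove[of _ i0]) (auto intro!: sum.neutral)
  finally show ?thesis .
qed

section \<open>The explicit coefficients\<close>

text \<open>\<open>ho_coeff k n j\<close> is the coefficient of \<open>exp (i (2j + 1 - n) x)\<close> in \<open>E_{n+1}(ix)\<close>;
  read backwards (\<open>j \<mapsto> n - j\<close>) they are the coefficients of \<open>E_{-n}(ix)\<close>.\<close>

definition ho_coeff :: "real \<Rightarrow> nat \<Rightarrow> nat \<Rightarrow> real" where
  "ho_coeff k n j = real (n choose j) * pochhammer k (n - j) * pochhammer (k + 1) j / pochhammer (k + 1) n"

definition ho_norm_factor :: "real \<Rightarrow> nat \<Rightarrow> real" where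
  "ho_norm_factor k n = fact n * pochhammer (2 * k + 1) n / (pochhammer (k + 1) n)\<^sup>2"

lemma ho_coeff_top:
  assumes "k \<ge> 0"
  shows "ho_coeff k n n = 1"
proof -
  have "pochhammer (k + 1) n > 0" using assms by (intro pochhammer_pos) simp
  then show ?thesis by (simp add: ho_coeff_def)
qed

lemma ho_coeff_orthogonal:
  assumes l: "l < n"
  shows "(\<Sum>j\<le>n. ho_coeff k n j * moment_ratio k (int j - int l)) = 0"
proof -
  obtain p1 :: "real poly"
    where p1: "degree p1 \<le> l" "\<And>x. poly p1 x = pochhammer ((k + 1 - real l) + 1 * x) l"
    using poly_pochhammer_affine[where a = "k + 1 - real l" and c = 1 and n = l] by blast
  obtain p2 :: "real poly"
    where p2: "degree p2 \<le> n - 1 - l" "\<And>x. poly p2 x = pochhammer ((k + 1 + real l) + (-1) * x) (n - 1 - l)"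
    using poly_pochhammer_affine[where a = "k + 1 + real l" and c = "-1" and n = "n - 1 - l"] by blast
  have deg: "degree (p1 * p2) < n"
    using degree_mult_le[of p1 p2] p1(1) p2(1) l by linarith
  define K where "K = (-1) ^ l * (Gamma (k + 1))\<^sup>2 * rGamma (k + 1) * rGamma k / pochhammer (k + 1) n"
  have summand: "ho_coeff k n j * moment_ratio k (int j - int l) =
                 K * ((-1) ^ j * real (n choose j) * poly (p1 * p2) (real j))"
    if j: "j \<le> n" for j
  proof -
    have F1: "pochhammer (k + 1) j * rGamma (k + 1 + real j - real l) =
              pochhammer (k + 1 + real j - real l) l * rGamma (k + 1)"
      by (rule pochhammer_rGamma_swap) simp
    have F2: "pochhammer k (n - j) * rGamma (k + 1 + real l - real j) =
              pochhammer (k + 1 + real l - real j) (n - 1 - l) * rGamma k"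
      by (rule pochhammer_rGamma_swap) (use j l in \<open>simp add: of_nat_diff\<close>)
    have "ho_coeff k n j * moment_ratio k (int j - int l) =
       (-1) ^ j * (-1) ^ l * (Gamma (k + 1))\<^sup>2 * real (n choose j) / pochhammer (k + 1) n *
       (pochhammer (k + 1) j * rGamma (k + 1 + real j - real l)) *
       (pochhammer k (n - j) * rGamma (k + 1 + real l - real j))"
      unfolding ho_coeff_def moment_ratio_def minus_one_power_nat_abs_diff by (simp add: algebra_simps)
    also have "\<dots> = K * ((-1) ^ j * real (n choose j) * poly (p1 * p2) (real j))"
      unfolding F1 F2 poly_mult p1(2) p2(2) K_def by (simp add: algebra_simps)
    finally show ?thesis .
  qed
  have "(\<Sum>j\<le>n. ho_coeff k n j * moment_ratio k (int j - int l)) =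
        K * (\<Sum>j\<le>n. (-1) ^ j * real (n choose j) * poly (p1 * p2) (real j))"
    by (simp add: summand sum_distrib_left)
  also have "(\<Sum>j\<le>n. (-1) ^ j * real (n choose j) * poly (p1 * p2) (real j)) = 0"
    using alternating_binomial_sum_poly[of "p1 * p2" n] deg by simp
  finally show ?thesis by simp
qed

lemma ho_coeff_mult_moment_ratio_top:
  assumes k: "k > 0" and j: "j \<le> n"
  shows "ho_coeff k n j * moment_ratio k (int j - int n) =
         (-1) ^ n * k / pochhammer (k + 1) n *
         ((-1) ^ j * real (n choose j) * (pochhammer (k + 1 - real n + real j) n / (k + real n - real j)))"
proof -
  have pos: "k + real n - real j > 0" using k j by simp
  have F1: "pochhammer (k + 1) j * rGamma (k + 1 + real j - real n) =
            pochhammer (k + 1 + real j - real n) n * rGamma (k + 1)"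
    by (rule pochhammer_rGamma_swap) simp
  have "pochhammer k (n - j) * rGamma (k + real n - real j) = rGamma k"
    using pochhammer_rGamma_swap[of k "n - j" "k + real n - real j" 0] j by (simp add: of_nat_diff)
  then have F2: "pochhammer k (n - j) * rGamma (k + 1 + real n - real j) = rGamma k / (k + real n - real j)"
    using rGamma_plus1[of "k + real n - real j"] pos by (simp add: field_simps)
  have "Gamma (k + 1) > 0" using k by simp
  then have gg: "Gamma (k + 1) * rGamma (k + 1) = 1"
    by (simp add: rGamma_inverse_Gamma)
  have rg: "rGamma k = k * rGamma (k + 1)" using rGamma_plus1[of k] by simp
  have "ho_coeff k n j * moment_ratio k (int j - int n) =
     (-1) ^ j * (-1) ^ n * (Gamma (k + 1))\<^sup>2 * real (n choose j) / pochhammer (k + 1) n *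
     (pochhammer (k + 1) j * rGamma (k + 1 + real j - real n)) *
     (pochhammer k (n - j) * rGamma (k + 1 + real n - real j))"
    unfolding ho_coeff_def moment_ratio_def minus_one_power_nat_abs_diff by (simp add: algebra_simps)
  also have "\<dots> = (-1) ^ j * (-1) ^ n * (Gamma (k + 1) * rGamma (k + 1))\<^sup>2 * k * real (n choose j)
                   / pochhammer (k + 1) n * (pochhammer (k + 1 - real n + real j) n / (k + real n - real j))"
    unfolding F1 F2 rg by (simp add: algebra_simps power2_eq_square)
  finally show ?thesis
    unfolding gg by (simp add: algebra_simps)
qed

text \<open>Splitting off the pole of \<open>1 / (k + n - j)\<close> from the Pochhammer factor reduces the sum
  to \<open>alternating_binomial_sum_inverse\<close> plus a finite difference of a polynomial of degree
  below \<open>n\<close>.\<close>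

lemma ho_coeff_norm_sum_pos:
  assumes k: "k > 0"
  shows "(\<Sum>j\<le>n. ho_coeff k n j * moment_ratio k (int j - int n)) = ho_norm_factor k n"
proof -
  define x0 where "x0 = k + real n"
  obtain Q :: "real poly"
    where Q: "degree Q \<le> n" "\<And>x. poly Q x = pochhammer ((k + 1 - real n) + 1 * x) n"
    using poly_pochhammer_affine[where a = "k + 1 - real n" and c = 1 and n = n] by blast
  obtain R where R: "degree R < n \<or> R = 0" "\<And>x. poly Q x = poly Q x0 + (x - x0) * poly R x"
    using poly_eq_linear_factor_remainder[OF Q(1)] by blast
  have c_eq: "poly Q x0 = pochhammer (2 * k + 1) n"
    unfolding Q(2) x0_def by (simp add: algebra_simps)
  have pk: "pochhammer (k + 1) n > 0" using k by (simp add: pochhammer_pos)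
  define C where "C = (-1) ^ n * k / pochhammer (k + 1) n"
  have summand: "ho_coeff k n j * moment_ratio k (int j - int n) =
      C * ((-1) ^ j * real (n choose j) * (poly Q x0 * (1 / (k + real n - real j)) - poly R (real j)))"
    if j: "j \<le> n" for j
  proof -
    have "k + real n - real j > 0" using k j by simp
    then have "pochhammer (k + 1 - real n + real j) n / (k + real n - real j) =
               poly Q x0 * (1 / (k + real n - real j)) - poly R (real j)"
      using Q(2)[of "real j"] R(2)[of "real j"] by (simp add: x0_def field_simps)
    then show ?thesis
      unfolding ho_coeff_mult_moment_ratio_top[OF k j] C_def by simp
  qed
  have "(\<Sum>j\<le>n. ho_coeff k n j * moment_ratio k (int j - int n)) =
      C * (poly Q x0 * (\<Sum>j\<le>n. (-1) ^ j * real (n choose j) * (1 / (k + real n - real j)))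
           - (\<Sum>j\<le>n. (-1) ^ j * real (n choose j) * poly R (real j)))"
    by (simp add: summand sum_distrib_left sum_subtractf algebra_simps)
  also have "\<dots> = C * (poly Q x0 * ((-1) ^ n * fact n / (k * pochhammer (k + 1) n)))"
    using alternating_binomial_sum_poly[OF R(1)]
    unfolding alternating_binomial_sum_inverse[OF k] by (simp add: pochhammer_rec)
  also have "\<dots> = ho_norm_factor k n"
    unfolding C_def c_eq ho_norm_factor_def using k pk
    by (simp add: field_simps power2_eq_square flip: power_add mult_2)
  finally show ?thesis .
qed

lemma ho_coeff_norm_sum:
  assumes k: "k \<ge> 0"
  shows "(\<Sum>j\<le>n. ho_coeff k n j * moment_ratio k (int j - int n)) = ho_norm_factor k n"
proof (cases "k = 0")
  case False
  with k show ?thesis using ho_coeff_norm_sum_pos by simp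
next
  case True
  have "(\<Sum>j\<le>n. ho_coeff 0 n j * moment_ratio 0 (int j - int n)) =
        ho_coeff 0 n n * moment_ratio 0 0 + (\<Sum>j\<in>{..n} - {n}. ho_coeff 0 n j * moment_ratio 0 (int j - int n))"
    by (subst sum.remove[of _ n]) auto
  also have "(\<Sum>j\<in>{..n} - {n}. ho_coeff 0 n j * moment_ratio 0 (int j - int n)) = 0"
    by (rule sum.neutral) (auto simp: ho_coeff_def pochhammer_0_left)
  finally show ?thesis
    using True ho_coeff_top[of 0 n] moment_ratio_0[of 0]
    by (simp add: ho_norm_factor_def pochhammer_fact[symmetric] power2_eq_square)
qed

lemma sum_reverse_moment_ratio:
  assumes "l \<le> n"
  shows "(\<Sum>i\<le>n. b (n - i) * moment_ratio k (int i - int l)) =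
         (\<Sum>i\<le>n. b i * moment_ratio k (int i - int (n - l)))"
proof (rule sum.reindex_bij_witness[of _ "\<lambda>i. n - i" "\<lambda>i. n - i"])
  fix i assume i: "i \<in> {..n}"
  then have "int (n - i) - int (n - l) = - (int i - int l)"
    using assms by (simp add: of_nat_diff)
  then show "b (n - i) * moment_ratio k (int (n - i) - int (n - l)) =
             b (n - i) * moment_ratio k (int i - int l)"
    by (simp only: moment_ratio_minus)
qed auto

section \<open>Trigonometric polynomials with even frequency gaps\<close>

definition exp_sum :: "nat \<Rightarrow> int \<Rightarrow> (nat \<Rightarrow> complex) \<Rightarrow> real \<Rightarrow> complex" where
  "exp_sum n s d x = (\<Sum>i\<le>n. d i * exp (\<i> * of_int (2 * int i + s) * of_real x))"

lemma exp_sum_mult_cnj_exp: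
  "exp_sum n s d x * cnj (exp (\<i> * of_int (2 * int l + s) * of_real x)) =
   (\<Sum>i\<le>n. d i * exp (\<i> * of_int (2 * (int i - int l)) * of_real x))"
proof -
  have "exp_sum n s d x * cnj (exp (\<i> * of_int (2 * int l + s) * of_real x)) =
        (\<Sum>i\<le>n. d i * (exp (\<i> * of_int (2 * int i + s) * of_real x) *
                         cnj (exp (\<i> * of_int (2 * int l + s) * of_real x))))"
    by (simp add: exp_sum_def sum_distrib_right mult.assoc)
  also have "\<dots> = (\<Sum>i\<le>n. d i * exp (\<i> * of_int (2 * (int i - int l)) * of_real x))"
    by (simp only: exp_int_mult_cnj) (simp add: algebra_simps)
  finally show ?thesis .
qed

lemma ho_inner_exp_sum:
  assumes k: "k \<ge> 0"
  shows "ho_inner k (exp_sum n s d) (\<lambda>x. exp (\<i> * of_int (2 * int l + s) * of_real x)) =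
         (\<Sum>i\<le>n. d i * ho_moment k (2 * (int i - int l))) / (2 * pi)"
proof -
  have integrand: "exp_sum n s d x * cnj (exp (\<i> * of_int (2 * int l + s) * of_real x)) * of_real (ho_weight k x) =
        (\<Sum>i\<le>n. d i * (exp (\<i> * of_int (2 * (int i - int l)) * of_real x) * of_real (ho_weight k x)))" for x
    unfolding exp_sum_mult_cnj_exp by (simp add: sum_distrib_right mult.assoc)
  have "((\<lambda>x. \<Sum>i\<le>n. d i * (exp (\<i> * of_int (2 * (int i - int l)) * of_real x) * of_real (ho_weight k x)))
          has_integral (\<Sum>i\<le>n. d i * ho_moment k (2 * (int i - int l)))) {0..2*pi}"
    by (intro has_integral_sum has_integral_mult_right has_integral_ho_moment k) simp
  then show ?thesis
    unfolding ho_inner_def integrand by (simp add: integral_unique)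
qed

lemma ho_norm2_exp_sum:
  assumes k: "k \<ge> 0"
  shows "ho_norm2 k (exp_sum n s d) =
         Re (\<Sum>i\<le>n. \<Sum>l\<le>n. d i * cnj (d l) * ho_moment k (2 * (int i - int l))) / (2 * pi)"
proof -
  define G where "G x = (\<Sum>i\<le>n. \<Sum>l\<le>n. d i * cnj (d l) *
      (exp (\<i> * of_int (2 * (int i - int l)) * of_real x) * of_real (ho_weight k x)))" for x
  have integrand: "(cmod (exp_sum n s d x))\<^sup>2 * ho_weight k x = Re (G x)" for x
  proof -
    have "exp_sum n s d x * cnj (exp_sum n s d x) =
          (\<Sum>l\<le>n. cnj (d l) * (exp_sum n s d x * cnj (exp (\<i> * of_int (2 * int l + s) * of_real x))))"
      by (simp add: exp_sum_def[of n s d x] cnj_sum sum_distrib_left algebra_simps)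
    also have "\<dots> = (\<Sum>i\<le>n. \<Sum>l\<le>n. d i * cnj (d l) * exp (\<i> * of_int (2 * (int i - int l)) * of_real x))"
      unfolding exp_sum_mult_cnj_exp sum_distrib_left by (subst sum.swap) (simp add: algebra_simps)
    finally have "G x = exp_sum n s d x * cnj (exp_sum n s d x) * of_real (ho_weight k x)"
      unfolding G_def by (simp add: sum_distrib_right mult.assoc)
    then show ?thesis by (simp flip: complex_norm_square)
  qed
  have "(G has_integral (\<Sum>i\<le>n. \<Sum>l\<le>n. d i * cnj (d l) * ho_moment k (2 * (int i - int l)))) {0..2*pi}"
    unfolding G_def[abs_def]
    by (intro has_integral_sum has_integral_mult_right has_integral_ho_moment k) simp_all
  from has_integral_linear[OF this bounded_linear_Re]
  show ?thesis
    unfolding ho_norm2_def integrand by (simp add: o_def integral_unique)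
qed

text \<open>Positive definiteness of the Gram matrix: a vanishing quadratic form forces the trigonometric
  polynomial to vanish wherever the weight is positive, and its coefficients are then read off
  with the unweighted (\<open>k = 0\<close>) inner product.\<close>

lemma ho_moment_gram_eq_0D:
  assumes k: "k \<ge> 0"
    and gram: "(\<Sum>i\<le>n. \<Sum>l\<le>n. d i * cnj (d l) * ho_moment k (2 * (int i - int l))) = 0"
    and l: "l \<le> n"
  shows "d l = 0"
proof -
  let ?F = "exp_sum n 0 d"
  define \<phi> where "\<phi> x = (cmod (?F x))\<^sup>2 * ho_weight k x" for x
  have cont: "continuous_on {0..2*pi} \<phi>" unfolding \<phi>_def exp_sum_def
    by (auto intro!: continuous_intros continuous_on_compose2[OF continuous_on_ho_weight[OF k]])
  have "ho_norm2 k ?F = 0"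
    unfolding ho_norm2_exp_sum[OF k] gram by simp
  then have "integral {0..2*pi} \<phi> = 0"
    by (simp add: ho_norm2_def \<phi>_def[abs_def])
  then have "(\<phi> has_integral 0) {0..2*pi}"
    using integrable_continuous_interval[OF cont] by (metis integrable_integral)
  then have \<phi>0: "\<phi> x = 0" if "x \<in> {0..2*pi}" for x
    using has_integral_0_cbox_imp_0[of 0 "2*pi" \<phi> x] cont that pi_gt_zero
    by (auto simp: \<phi>_def ho_weight_nonneg)
  have F0: "?F x = 0" if x: "x \<in> {0<..<2*pi} - {pi}" for x
  proof -
    have "\<phi> x = 0" using x by (intro \<phi>0) auto
    moreover have "ho_weight k x \<noteq> 0"
      by (rule ho_weight_neq_zero[OF sin_neq_zero_in_period[OF x]])
    ultimately show ?thesis by (simp add: \<phi>_def)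
  qed
  have "(\<Sum>i\<le>n. d i * ho_moment 0 (2 * (int i - int l))) = (\<Sum>i\<le>n. if i = l then d i * of_real (2 * pi) else 0)"
    by (intro sum.cong refl) (simp only: ho_moment_weight_0, simp)
  then have "ho_inner 0 ?F (\<lambda>x. exp (\<i> * of_int (2 * int l + 0) * of_real x)) = d l"
    using ho_inner_exp_sum[of 0 n 0 d l] l by simp
  moreover have "integral {0..2*pi} (\<lambda>x. ?F x * cnj (exp (\<i> * of_int (2 * int l + 0) * of_real x))
                    * of_real (ho_weight 0 x)) = integral {0..2*pi} (\<lambda>x. 0)"
    by (rule integral_spike[of "{0, pi, 2*pi}"]) (auto simp: F0)
  then have "ho_inner 0 ?F (\<lambda>x. exp (\<i> * of_int (2 * int l + 0) * of_real x)) = 0"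
    unfolding ho_inner_def by simp
  ultimately show ?thesis by simp
qed

section \<open>The polynomials E_(n+1) and E_(-n)\<close>

lemma ho_less_succ_iff:
  "ho_less j (int n + 1) \<longleftrightarrow> (\<exists>m. 0 \<le> m \<and> m < int n \<and> j = 2 * m + (1 - int n))"
  unfolding ho_less_def by (cases "j \<ge> 0") (auto simp: abs_if; presburger)+

lemma ho_less_uminus_iff:
  "ho_less j (- int n) \<longleftrightarrow> (\<exists>m. 1 \<le> m \<and> m \<le> int n \<and> j = 2 * m + (- int n))"
  unfolding ho_less_def by (cases "j \<ge> 0") (auto simp: abs_if; presburger)+

lemma ho_less_set_succ: "{j. ho_less j (int n + 1)} = (\<lambda>i. 2 * int i + (1 - int n)) ` ({..n} - {n})"
proof (intro set_eqI iffI)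
  fix j assume "j \<in> {j. ho_less j (int n + 1)}"
  then obtain m where "0 \<le> m" "m < int n" "j = 2 * m + (1 - int n)"
    using ho_less_succ_iff by auto
  then show "j \<in> (\<lambda>i. 2 * int i + (1 - int n)) ` ({..n} - {n})"
    by (intro image_eqI[of _ _ "nat m"]) auto
qed (auto simp: ho_less_succ_iff)

lemma ho_less_set_uminus: "{j. ho_less j (- int n)} = (\<lambda>i. 2 * int i + (- int n)) ` ({..n} - {0})"
proof (intro set_eqI iffI)
  fix j assume "j \<in> {j. ho_less j (- int n)}"
  then obtain m where "1 \<le> m" "m \<le> int n" "j = 2 * m + (- int n)"
    using ho_less_uminus_iff by auto
  then show "j \<in> (\<lambda>i. 2 * int i + (- int n)) ` ({..n} - {0})"
    by (intro image_eqI[of _ _ "nat m"]) auto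
qed (auto simp: ho_less_uminus_iff)

lemma ho_form_eq_exp_sum:
  assumes i0: "i0 \<le> n" and N: "N = 2 * int i0 + s"
    and S: "{j. ho_less j N} = (\<lambda>i. 2 * int i + s) ` ({..n} - {i0})"
  shows "ho_form N c (\<i> * of_real x) = exp_sum n s (\<lambda>i. if i = i0 then 1 else c (2 * int i + s)) x"
proof -
  let ?e = "\<lambda>i. exp (\<i> * of_int (2 * int i + s) * of_real x)"
  have inj: "inj_on (\<lambda>i. 2 * int i + s) ({..n} - {i0})" by (auto simp: inj_on_def)
  have "(\<Sum>j\<in>{j. ho_less j N}. c j * exp (of_int j * (\<i> * of_real x))) =
        (\<Sum>i\<in>{..n} - {i0}. (if i = i0 then 1 else c (2 * int i + s)) * ?e i)"
    unfolding S by (subst sum.reindex[OF inj]) (auto simp: mult_ac intro!: sum.cong)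
  moreover have "exp_sum n s (\<lambda>i. if i = i0 then 1 else c (2 * int i + s)) x =
        ?e i0 + (\<Sum>i\<in>{..n} - {i0}. (if i = i0 then 1 else c (2 * int i + s)) * ?e i)"
    unfolding exp_sum_def using i0 by (subst sum.remove[of _ i0]) auto
  ultimately show ?thesis
    unfolding ho_form_def N by (simp add: mult_ac)
qed

definition ho_orthogonal_coeffs :: "real \<Rightarrow> int \<Rightarrow> (int \<Rightarrow> complex) \<Rightarrow> bool" where
  "ho_orthogonal_coeffs k N c \<longleftrightarrow>
     (\<forall>j. \<not> ho_less j N \<longrightarrow> c j = 0) \<and>
     (\<forall>j. ho_less j N \<longrightarrow>
        ho_inner k (\<lambda>x. ho_form N c (\<i> * of_real x)) (\<lambda>x. exp (\<i> * of_int j * of_real x)) = 0)"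

lemma ho_coeffs_eq_The: "ho_coeffs k N = (THE c. ho_orthogonal_coeffs k N c)"
  unfolding ho_coeffs_def ho_orthogonal_coeffs_def ..

lemma ho_less_iff_index:
  assumes S: "{j. ho_less j N} = (\<lambda>i. 2 * int i + s) ` ({..n} - {i0})"
  shows "ho_less j N \<longleftrightarrow> (\<exists>l. l \<le> n \<and> l \<noteq> i0 \<and> j = 2 * int l + s)"
proof -
  have "ho_less j N \<longleftrightarrow> j \<in> (\<lambda>i. 2 * int i + s) ` ({..n} - {i0})"
    unfolding S[symmetric] by simp
  then show ?thesis by auto
qed

lemma ho_inner_ho_form_exp:
  assumes k: "k \<ge> 0" and i0: "i0 \<le> n" and N: "N = 2 * int i0 + s"
    and S: "{j. ho_less j N} = (\<lambda>i. 2 * int i + s) ` ({..n} - {i0})"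
  shows "ho_inner k (\<lambda>x. ho_form N c (\<i> * of_real x)) (\<lambda>x. exp (\<i> * of_int (2 * int l + s) * of_real x)) =
         (\<Sum>i\<le>n. (if i = i0 then 1 else c (2 * int i + s)) * ho_moment k (2 * (int i - int l))) / (2 * pi)"
  unfolding ho_form_eq_exp_sum[OF i0 N S] by (rule ho_inner_exp_sum[OF k])

text \<open>The difference of two solutions is orthogonal to itself.\<close>

lemma ho_orthogonal_coeffs_unique:
  assumes k: "k \<ge> 0" and i0: "i0 \<le> n" and N: "N = 2 * int i0 + s"
    and S: "{j. ho_less j N} = (\<lambda>i. 2 * int i + s) ` ({..n} - {i0})"
    and c: "ho_orthogonal_coeffs k N c" and c': "ho_orthogonal_coeffs k N c'"
  shows "c = c'"
proof -
  define \<beta> where "\<beta> c i = (if i = i0 then 1 else c (2 * int i + s))" for c :: "int \<Rightarrow> complex" and i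
  have moments: "(\<Sum>i\<le>n. \<beta> c i * ho_moment k (2 * (int i - int l))) = 0"
    if "ho_orthogonal_coeffs k N c" "l \<le> n" "l \<noteq> i0" for c l
  proof -
    have "ho_less (2 * int l + s) N"
      unfolding ho_less_iff_index[OF S] using that(2,3) by blast
    with that(1)[unfolded ho_orthogonal_coeffs_def]
    have "ho_inner k (\<lambda>x. ho_form N c (\<i> * of_real x))
            (\<lambda>x. exp (\<i> * of_int (2 * int l + s) * of_real x)) = 0"
      by blast
    then show ?thesis
      unfolding ho_inner_ho_form_exp[OF k i0 N S] \<beta>_def by simp
  qed
  define d where "d i = \<beta> c i - \<beta> c' i" for i
  have d_orth: "(\<Sum>i\<le>n. d i * ho_moment k (2 * (int i - int l))) = 0" if "l \<le> n" "l \<noteq> i0" for l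
  proof -
    have "(\<Sum>i\<le>n. d i * ho_moment k (2 * (int i - int l))) =
          (\<Sum>i\<le>n. \<beta> c i * ho_moment k (2 * (int i - int l))) -
          (\<Sum>i\<le>n. \<beta> c' i * ho_moment k (2 * (int i - int l)))"
      by (simp add: d_def left_diff_distrib sum_subtractf)
    then show ?thesis
      using moments[OF c that] moments[OF c' that] by simp
  qed
  have "(\<Sum>i\<le>n. \<Sum>l\<le>n. d i * cnj (d l) * ho_moment k (2 * (int i - int l))) =
        cnj (d i0) * (\<Sum>i\<le>n. d i * ho_moment k (2 * (int i - int i0)))"
    by (rule sum_sum_orthogonal[OF i0 d_orth])
  also have "d i0 = 0" by (simp add: d_def \<beta>_def)
  finally have gram: "(\<Sum>i\<le>n. \<Sum>l\<le>n. d i * cnj (d l) * ho_moment k (2 * (int i - int l))) = 0"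
    by simp
  show ?thesis
  proof
    fix j
    show "c j = c' j"
    proof (cases "ho_less j N")
      case True
      then obtain l where l: "l \<le> n" "l \<noteq> i0" "j = 2 * int l + s"
        by (auto simp: ho_less_iff_index[OF S])
      with ho_moment_gram_eq_0D[OF k gram l(1)] show ?thesis by (simp add: d_def \<beta>_def)
    next
      case False
      with c c' show ?thesis by (simp add: ho_orthogonal_coeffs_def)
    qed
  qed
qed

lemma HO_E_eq_exp_sum:
  assumes k: "k \<ge> 0" and i0: "i0 \<le> n" and N: "N = 2 * int i0 + s"
    and S: "{j. ho_less j N} = (\<lambda>i. 2 * int i + s) ` ({..n} - {i0})"
    and b_top: "b i0 = 1"
    and b_orth: "\<And>l. l \<le> n \<Longrightarrow> l \<noteq> i0 \<Longrightarrow> (\<Sum>i\<le>n. b i * moment_ratio k (int i - int l)) = 0"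
  shows "HO_E k N (\<i> * of_real x) = exp_sum n s (\<lambda>i. of_real (b i)) x"
proof -
  define c where "c j = (if ho_less j N then complex_of_real (b (nat ((j - s) div 2))) else 0)" for j
  have coeff: "(if i = i0 then 1 else c (2 * int i + s)) = of_real (b i)" if "i \<le> n" for i
  proof (cases "i = i0")
    case False
    with that have "ho_less (2 * int i + s) N"
      unfolding ho_less_iff_index[OF S] by blast
    with False show ?thesis by (simp add: c_def)
  qed (simp add: b_top)
  have "ho_orthogonal_coeffs k N c"
    unfolding ho_orthogonal_coeffs_def
  proof (intro conjI allI impI)
    fix j
    show "c j = 0" if "\<not> ho_less j N" using that by (simp add: c_def)
    show "ho_inner k (\<lambda>x. ho_form N c (\<i> * of_real x)) (\<lambda>x. exp (\<i> * of_int j * of_real x)) = 0"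
      if lower: "ho_less j N"
    proof -
      obtain l where l: "l \<le> n" "l \<noteq> i0" "j = 2 * int l + s"
        using lower by (auto simp: ho_less_iff_index[OF S])
      have "(\<Sum>i\<le>n. (if i = i0 then 1 else c (2 * int i + s)) * ho_moment k (2 * (int i - int l))) =
            (\<Sum>i\<le>n. of_real (b i) * ho_moment k (2 * (int i - int l)))"
        by (intro sum.cong refl) (simp add: coeff)
      also have "\<dots> = of_real (ho_mass k * (\<Sum>i\<le>n. b i * moment_ratio k (int i - int l)))"
        by (simp only: ho_moment_even[OF k]) (simp add: sum_distrib_left mult_ac)
      also have "\<dots> = 0"
        using b_orth[OF l(1,2)] by simp
      finally show ?thesis
        unfolding l(3) ho_inner_ho_form_exp[OF k i0 N S] by simp
    qed
  qed
  then have "ho_coeffs k N = c"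
    unfolding ho_coeffs_eq_The
    using ho_orthogonal_coeffs_unique[OF k i0 N S _ \<open>ho_orthogonal_coeffs k N c\<close>]
    by (rule the_equality)
  then have "HO_E k N (\<i> * of_real x) = ho_form N c (\<i> * of_real x)"
    by (simp only: HO_E_def)
  also have "\<dots> = exp_sum n s (\<lambda>i. of_real (b i)) x"
    unfolding ho_form_eq_exp_sum[OF i0 N S] exp_sum_def by (intro sum.cong refl) (simp add: coeff)
  finally show ?thesis .
qed

text \<open>Since \<open>E_N\<close> is orthogonal to its lower terms, its squared norm is its inner product
  with the leading exponential.\<close>

lemma ho_norm2_HO_E:
  assumes k: "k \<ge> 0" and i0: "i0 \<le> n" and N: "N = 2 * int i0 + s"
    and S: "{j. ho_less j N} = (\<lambda>i. 2 * int i + s) ` ({..n} - {i0})"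
    and b_top: "b i0 = 1"
    and b_orth: "\<And>l. l \<le> n \<Longrightarrow> l \<noteq> i0 \<Longrightarrow> (\<Sum>i\<le>n. b i * moment_ratio k (int i - int l)) = 0"
  shows "ho_norm2 k (\<lambda>x. HO_E k N (\<i> * of_real x)) =
         ho_mass k / (2 * pi) * (\<Sum>i\<le>n. b i * moment_ratio k (int i - int i0))"
proof -
  have "(\<Sum>i\<le>n. \<Sum>l\<le>n. complex_of_real (b i) * cnj (of_real (b l)) * ho_moment k (2 * (int i - int l))) =
        of_real (ho_mass k * (\<Sum>i\<le>n. \<Sum>l\<le>n. b i * b l * moment_ratio k (int i - int l)))"
    by (simp only: ho_moment_even[OF k]) (simp add: sum_distrib_left mult_ac)
  also have "(\<Sum>i\<le>n. \<Sum>l\<le>n. b i * b l * moment_ratio k (int i - int l)) =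
             (\<Sum>i\<le>n. b i * moment_ratio k (int i - int i0))"
    using sum_sum_orthogonal[OF i0, of b "\<lambda>i l. moment_ratio k (int i - int l)" b] b_orth b_top by simp
  finally have gram: "(\<Sum>i\<le>n. \<Sum>l\<le>n. complex_of_real (b i) * cnj (of_real (b l)) * ho_moment k (2 * (int i - int l))) =
        of_real (ho_mass k * (\<Sum>i\<le>n. b i * moment_ratio k (int i - int i0)))" .
  have "ho_norm2 k (\<lambda>x. HO_E k N (\<i> * of_real x)) =
        Re (\<Sum>i\<le>n. \<Sum>l\<le>n. complex_of_real (b i) * cnj (of_real (b l)) * ho_moment k (2 * (int i - int l))) / (2 * pi)"
  proof -
    have E: "(\<lambda>x. HO_E k N (\<i> * of_real x)) = exp_sum n s (\<lambda>i. of_real (b i))"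
      using HO_E_eq_exp_sum[OF assms] by (intro ext)
    show ?thesis unfolding E by (rule ho_norm2_exp_sum[OF k])
  qed
  then show ?thesis
    unfolding gram by simp
qed

lemma ho_mass_mult_norm_factor:
  assumes k: "k \<ge> 0"
  shows "ho_mass k / (2 * pi) * ho_norm_factor k n =
         fact n * Gamma (real n + 2 * k + 1) / (Gamma (real n + k + 1))\<^sup>2"
proof -
  have "2 * k + 1 \<notin> \<int>\<^sub>\<le>\<^sub>0" "k + 1 \<notin> \<int>\<^sub>\<le>\<^sub>0" using k by (auto dest: nonpos_Ints_nonpos)
  from this[THEN pochhammer_Gamma, of n]
  have p: "pochhammer (2 * k + 1) n = Gamma (real n + 2 * k + 1) / Gamma (2 * k + 1)"
          "pochhammer (k + 1) n = Gamma (real n + k + 1) / Gamma (k + 1)"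
    by (simp_all add: algebra_simps)
  have "Gamma (2 * k + 1) > 0" "Gamma (k + 1) > 0" "Gamma (real n + k + 1) > 0" using k by auto
  then show ?thesis unfolding ho_mass_def ho_norm_factor_def p
    by (simp add: field_simps power2_eq_square)
qed

lemma ho_norm2_HO_E_succ:
  assumes k: "k \<ge> 0"
  shows "ho_norm2 k (\<lambda>x. HO_E k (int n + 1) (\<i> * of_real x)) = ho_mass k / (2 * pi) * ho_norm_factor k n"
proof -
  have "ho_norm2 k (\<lambda>x. HO_E k (int n + 1) (\<i> * of_real x)) =
        ho_mass k / (2 * pi) * (\<Sum>i\<le>n. ho_coeff k n i * moment_ratio k (int i - int n))"
  proof (rule ho_norm2_HO_E[OF k _ _ ho_less_set_succ])
    show "ho_coeff k n n = 1" by (rule ho_coeff_top[OF k])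
    show "(\<Sum>i\<le>n. ho_coeff k n i * moment_ratio k (int i - int l)) = 0" if "l \<le> n" "l \<noteq> n" for l
      using that by (simp add: ho_coeff_orthogonal)
  qed simp_all
  then show ?thesis
    by (simp only: ho_coeff_norm_sum[OF k])
qed

lemma ho_norm2_HO_E_uminus:
  assumes k: "k \<ge> 0"
  shows "ho_norm2 k (\<lambda>x. HO_E k (- int n) (\<i> * of_real x)) = ho_mass k / (2 * pi) * ho_norm_factor k n"
proof -
  have "ho_norm2 k (\<lambda>x. HO_E k (- int n) (\<i> * of_real x)) =
        ho_mass k / (2 * pi) * (\<Sum>i\<le>n. ho_coeff k n (n - i) * moment_ratio k (int i - int 0))"
  proof (rule ho_norm2_HO_E[OF k _ _ ho_less_set_uminus])
    show "ho_coeff k n (n - 0) = 1" using ho_coeff_top[OF k] by simp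
    show "(\<Sum>i\<le>n. ho_coeff k n (n - i) * moment_ratio k (int i - int l)) = 0" if "l \<le> n" "l \<noteq> 0" for l
      unfolding sum_reverse_moment_ratio[OF that(1)] by (rule ho_coeff_orthogonal) (use that in simp)
  qed simp_all
  then show ?thesis
    by (simp only: sum_reverse_moment_ratio[OF le0] diff_zero ho_coeff_norm_sum[OF k])
qed

theorem mainTheorem5:
  fixes k :: real and n :: nat
  assumes "k \<ge> 0"
  shows "ho_norm2 k (\<lambda>x. HO_E k (int n + 1) (\<i> * of_real x))
           = fact n * Gamma (real n + 2 * k + 1) / (Gamma (real n + k + 1))\<^sup>2
       \<and> ho_norm2 k (\<lambda>x. HO_E k (- int n) (\<i> * of_real x))
           = fact n * Gamma (real n + 2 * k + 1) / (Gamma (real n + k + 1))\<^sup>2"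
  unfolding ho_norm2_HO_E_succ[OF assms] ho_norm2_HO_E_uminus[OF assms] ho_mass_mult_norm_factor[OF assms]
  by simp

end
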